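(* Let $\Omega\subset\mathbb{C}$ be a simply connected open set with conformal coordinate $z=x+iy$, let $N:\Omega\to\mathbb{S}^2\subset\mathbb{R}^3$ be a smooth harmonic map, and let $f:\Omega\to\mathbb{R}^3$ be a spherical frontal associated to $N$, i.e. a smooth map with $f_x=N\times N_y$ and $f_y=-N\times N_x$. Let $p\in\Omega$. Then $f$ is a wave front near $p$ if and only if $\operatorname{rank}(dN)_p\neq 0$.
   Context: A smooth map $N:\Omega\to\mathbb{S}^2$ is harmonic iff $N\times(N_{xx}+N_{yy})=0$; this is the integrability condition for $f_x=N\times N_y,\ f_y=-N\times N_x$, so such $f$ exists and is unique up to translation. A map $h:M\to\mathbb{R}^3$ from a surface is a frontal if there is a smooth $\mathcal{N}:M\to\mathbb{S}^2$ with $dh$ orthogonal to $\mathcal{N}$; it is a wave front (front) if the Legendrian lift $(h,\mathcal{N}):M\to\mathbb{R}^3\times\mathbb{S}^2$ is an immersion. For the spherical frontal $f$ the relevant lift is $(f,N)$. *)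

theory Defs
  imports "HOL-Analysis.Analysis"
begin

definition pdx :: "(complex \<Rightarrow> 'a::real_normed_vector) \<Rightarrow> complex \<Rightarrow> 'a" where
  "pdx F z = frechet_derivative F (at z) 1"

definition pdy :: "(complex \<Rightarrow> 'a::real_normed_vector) \<Rightarrow> complex \<Rightarrow> 'a" where
  "pdy F z = frechet_derivative F (at z) \<i>"

fun Ck_on :: "nat \<Rightarrow> complex set \<Rightarrow> (complex \<Rightarrow> 'a::real_normed_vector) \<Rightarrow> bool" where
  "Ck_on 0 S F = continuous_on S F"
| "Ck_on (Suc k) S F = (F differentiable_on S \<and> continuous_on S F
      \<and> Ck_on k S (pdx F) \<and> Ck_on k S (pdy F))"

definition smooth_on :: "complex set \<Rightarrow> (complex \<Rightarrow> 'a::real_normed_vector) \<Rightarrow> bool" where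
  "smooth_on S F = (\<forall>k. Ck_on k S F)"

definition harmonic_sphere_map :: "complex set \<Rightarrow> (complex \<Rightarrow> real^3) \<Rightarrow> bool" where
  "harmonic_sphere_map \<Omega> N =
     (smooth_on \<Omega> N \<and> (\<forall>z\<in>\<Omega>. norm (N z) = 1)
      \<and> (\<forall>z\<in>\<Omega>. cross3 (N z) (pdx (pdx N) z + pdy (pdy N) z) = 0))"

definition spherical_frontal :: "complex set \<Rightarrow> (complex \<Rightarrow> real^3) \<Rightarrow> (complex \<Rightarrow> real^3) \<Rightarrow> bool" where
  "spherical_frontal \<Omega> N f =
     (smooth_on \<Omega> f \<and> (\<forall>z\<in>\<Omega>. pdx f z = cross3 (N z) (pdy N z)
                                \<and> pdy f z = - cross3 (N z) (pdx N z)))"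

definition frontal_on :: "complex set \<Rightarrow> (complex \<Rightarrow> real^3) \<Rightarrow> (complex \<Rightarrow> real^3) \<Rightarrow> bool" where
  "frontal_on U h N =
     (\<forall>q\<in>U. norm (N q) = 1 \<and> (\<forall>v. frechet_derivative h (at q) v \<bullet> N q = 0))"

definition wave_front_on :: "complex set \<Rightarrow> (complex \<Rightarrow> real^3) \<Rightarrow> (complex \<Rightarrow> real^3) \<Rightarrow> bool" where
  "wave_front_on U h N =
     (frontal_on U h N \<and>
      (\<forall>q\<in>U. (\<lambda>z. (h z, N z)) differentiable (at q)
             \<and> inj (frechet_derivative (\<lambda>z. (h z, N z)) (at q))))"

definition wave_front_near :: "complex set \<Rightarrow> (complex \<Rightarrow> real^3) \<Rightarrow> (complex \<Rightarrow> real^3) \<Rightarrow> complex \<Rightarrow> bool" where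
  "wave_front_near \<Omega> h N p = (\<exists>U. open U \<and> p \<in> U \<and> U \<subseteq> \<Omega> \<and> wave_front_on U h N)"

end

theory Submission
  imports Defs
begin

text \<open>
  Write v = a + i b and N_x, N_y for the partial derivatives of N at q, so dN v = a N_x + b N_y.
  The frontal equations give df v = N \<times> (a N_y - b N_x), which is orthogonal to N, so f is a
  frontal with normal N. If dN vanishes at p, so does the differential of the lift (f, N).
  Otherwise, since N_x and N_y are tangent to the sphere, a kernel vector of d(f, N) satisfies
  a N_y = b N_x and a N_x + b N_y = 0, whence (a^2 + b^2) N_x = (a^2 + b^2) N_y = 0 and v = 0.
  The condition dN \<noteq> 0 is open because N is C^2.
\<close>

lemma frechet_derivative_complex_eq:
  assumes "F differentiable (at z)"
  shows "frechet_derivative F (at z) v = Re v *\<^sub>R pdx F z + Im v *\<^sub>R pdy F z"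
proof -
  have lin: "linear (frechet_derivative F (at z))"
    using assms frechet_derivative_works has_derivative_linear by blast
  have "v = Re v *\<^sub>R 1 + Im v *\<^sub>R \<i>"
    by (simp add: complex_eq_iff)
  then have "frechet_derivative F (at z) v = frechet_derivative F (at z) (Re v *\<^sub>R 1 + Im v *\<^sub>R \<i>)"
    by simp
  also have "\<dots> = Re v *\<^sub>R pdx F z + Im v *\<^sub>R pdy F z"
    using lin unfolding pdx_def pdy_def by (simp add: linear_add linear_scale)
  finally show ?thesis .
qed

lemma dim_range_frechet_derivative_complex_eq_0_iff:
  fixes F :: "complex \<Rightarrow> 'a::euclidean_space"
  assumes "F differentiable (at z)"
  shows "dim (range (frechet_derivative F (at z))) = 0 \<longleftrightarrow> pdx F z = 0 \<and> pdy F z = 0"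
proof -
  have "dim (range (frechet_derivative F (at z))) = 0 \<longleftrightarrow> (\<forall>v. frechet_derivative F (at z) v = 0)"
    by (auto simp: image_subset_iff)
  also have "\<dots> \<longleftrightarrow> pdx F z = 0 \<and> pdy F z = 0"
  proof
    assume "\<forall>v. frechet_derivative F (at z) v = 0"
    then show "pdx F z = 0 \<and> pdy F z = 0"
      unfolding pdx_def pdy_def by blast
  qed (simp add: frechet_derivative_complex_eq[OF assms])
  finally show ?thesis .
qed

lemma unit_sphere_derivative_orthogonal:
  fixes N :: "'a::real_normed_vector \<Rightarrow> 'b::real_inner"
  assumes "open S" "q \<in> S" "\<forall>z\<in>S. norm (N z) = 1" "N differentiable (at q)"
  shows "N q \<bullet> frechet_derivative N (at q) v = 0"
proof -
  let ?N' = "frechet_derivative N (at q)"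
  have "(N has_derivative ?N') (at q)"
    using assms(4) frechet_derivative_works by blast
  then have "((\<lambda>z. N z \<bullet> N z) has_derivative (\<lambda>v. N q \<bullet> ?N' v + ?N' v \<bullet> N q)) (at q)"
    using has_derivative_inner by blast
  moreover have "((\<lambda>z. N z \<bullet> N z) has_derivative (\<lambda>v. 0)) (at q)"
  proof (rule has_derivative_transform_within_open[OF _ assms(1,2)])
    show "((\<lambda>z. 1::real) has_derivative (\<lambda>v. 0)) (at q)" by simp
    show "\<And>x. x \<in> S \<Longrightarrow> 1 = N x \<bullet> N x" using assms(3) norm_eq_1 by metis
  qed
  ultimately have "(\<lambda>v. N q \<bullet> ?N' v + ?N' v \<bullet> N q) = (\<lambda>v. 0)"
    using has_derivative_unique by blast
  then show ?thesis
    by (metis inner_commute mult_2 mult_eq_0_iff zero_neq_numeral)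
qed

lemma cross3_unit_orthogonal_eq_0:
  fixes n y :: "real^3"
  assumes "norm n = 1" "n \<bullet> y = 0" "cross3 n y = 0"
  shows "y = 0"
  using norm_cross_dot[of n y] assms by simp

lemma cross3_lift_kernel_trivial:
  fixes n u w :: "real^3" and a b :: real
  assumes "norm n = 1" "n \<bullet> u = 0" "n \<bullet> w = 0" "u \<noteq> 0 \<or> w \<noteq> 0"
    and cross_eq: "a *\<^sub>R cross3 n w - b *\<^sub>R cross3 n u = 0"
    and tangent_eq: "a *\<^sub>R u + b *\<^sub>R w = 0"
  shows "a = 0 \<and> b = 0"
proof -
  have "cross3 n (a *\<^sub>R w - b *\<^sub>R u) = 0"
    using cross_eq by (simp add: Cross3.right_diff_distrib cross_mult_right)
  moreover have "n \<bullet> (a *\<^sub>R w - b *\<^sub>R u) = 0"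
    using assms(2,3) by (simp add: inner_diff_right)
  ultimately have rot_eq: "a *\<^sub>R w - b *\<^sub>R u = 0"
    using cross3_unit_orthogonal_eq_0 assms(1) by blast
  have "(a*a + b*b) *\<^sub>R u = a *\<^sub>R (a *\<^sub>R u + b *\<^sub>R w) - b *\<^sub>R (a *\<^sub>R w - b *\<^sub>R u)"
    and "(a*a + b*b) *\<^sub>R w = b *\<^sub>R (a *\<^sub>R u + b *\<^sub>R w) + a *\<^sub>R (a *\<^sub>R w - b *\<^sub>R u)"
    by (simp_all add: algebra_simps)
  then have "(a*a + b*b) *\<^sub>R u = 0" "(a*a + b*b) *\<^sub>R w = 0"
    using rot_eq tangent_eq by simp_all
  then have "a*a + b*b = 0"
    using assms(4) by auto
  then show ?thesis
    by (auto simp: add_nonneg_eq_0_iff)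
qed

lemma spherical_lift_derivative:
  assumes "f differentiable (at q)" "N differentiable (at q)"
    and "pdx f q = cross3 (N q) (pdy N q)" "pdy f q = - cross3 (N q) (pdx N q)"
  shows "frechet_derivative (\<lambda>z. (f z, N z)) (at q) =
    (\<lambda>v. (Re v *\<^sub>R cross3 (N q) (pdy N q) - Im v *\<^sub>R cross3 (N q) (pdx N q),
          Re v *\<^sub>R pdx N q + Im v *\<^sub>R pdy N q))"
proof -
  have "((\<lambda>z. (f z, N z)) has_derivative
      (\<lambda>v. (frechet_derivative f (at q) v, frechet_derivative N (at q) v))) (at q)"
    using assms(1,2) frechet_derivative_works has_derivative_Pair by blast
  then have "frechet_derivative (\<lambda>z. (f z, N z)) (at q) =
      (\<lambda>v. (frechet_derivative f (at q) v, frechet_derivative N (at q) v))"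
    by (rule frechet_derivative_at[symmetric])
  then show ?thesis
    by (simp add: frechet_derivative_complex_eq[OF assms(1)] frechet_derivative_complex_eq[OF assms(2)]
      assms(3,4))
qed

lemma spherical_lift_inj_iff:
  fixes f N :: "complex \<Rightarrow> real^3"
  assumes "f differentiable (at q)" "N differentiable (at q)"
    and "pdx f q = cross3 (N q) (pdy N q)" "pdy f q = - cross3 (N q) (pdx N q)"
    and "norm (N q) = 1" "N q \<bullet> pdx N q = 0" "N q \<bullet> pdy N q = 0"
  shows "inj (frechet_derivative (\<lambda>z. (f z, N z)) (at q)) \<longleftrightarrow> pdx N q \<noteq> 0 \<or> pdy N q \<noteq> 0"
proof
  assume "inj (frechet_derivative (\<lambda>z. (f z, N z)) (at q))"
  then show "pdx N q \<noteq> 0 \<or> pdy N q \<noteq> 0"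
  proof (rule contrapos_pp)
    assume "\<not> (pdx N q \<noteq> 0 \<or> pdy N q \<noteq> 0)"
    then have "frechet_derivative (\<lambda>z. (f z, N z)) (at q) 1 = frechet_derivative (\<lambda>z. (f z, N z)) (at q) 0"
      unfolding spherical_lift_derivative[OF assms(1-4)] by simp
    then show "\<not> inj (frechet_derivative (\<lambda>z. (f z, N z)) (at q))"
      by (meson injD one_neq_zero)
  qed
next
  assume nonzero: "pdx N q \<noteq> 0 \<or> pdy N q \<noteq> 0"
  have "((\<lambda>z. (f z, N z)) has_derivative frechet_derivative (\<lambda>z. (f z, N z)) (at q)) (at q)"
    using assms(1,2) differentiable_Pair frechet_derivative_works by blast
  then have "linear (frechet_derivative (\<lambda>z. (f z, N z)) (at q))"
    using has_derivative_linear by blast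
  moreover have "v = 0" if "frechet_derivative (\<lambda>z. (f z, N z)) (at q) v = 0" for v
  proof -
    have "Re v *\<^sub>R cross3 (N q) (pdy N q) - Im v *\<^sub>R cross3 (N q) (pdx N q) = 0"
      and "Re v *\<^sub>R pdx N q + Im v *\<^sub>R pdy N q = 0"
      using that unfolding spherical_lift_derivative[OF assms(1-4)] by (simp_all add: zero_prod_def)
    then have "Re v = 0 \<and> Im v = 0"
      by (rule cross3_lift_kernel_trivial[OF assms(5-7) nonzero])
    then show ?thesis by (simp add: complex_eq_iff)
  qed
  ultimately show "inj (frechet_derivative (\<lambda>z. (f z, N z)) (at q))"
    using linear_injective_0 by blast
qed

lemma smooth_on_differentiable_at:
  assumes "smooth_on S F" "open S" "q \<in> S"
  shows "F differentiable (at q)"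
proof -
  have "Ck_on (Suc 0) S F"
    using assms(1) unfolding smooth_on_def by blast
  then show ?thesis
    using assms(2,3) differentiable_on_eq_differentiable_at by auto
qed

lemma smooth_on_continuous_partials:
  assumes "smooth_on S F"
  shows "continuous_on S (pdx F)" "continuous_on S (pdy F)"
proof -
  have "Ck_on (Suc (Suc 0)) S F"
    using assms unfolding smooth_on_def by blast
  then show "continuous_on S (pdx F)" "continuous_on S (pdy F)"
    by auto
qed

lemma open_nonvanishing_partials:
  assumes "open S" "continuous_on S (pdx F)" "continuous_on S (pdy F)"
  shows "open {q \<in> S. pdx F q \<noteq> 0 \<or> pdy F q \<noteq> 0}"
proof -
  have "{q \<in> S. pdx F q \<noteq> 0 \<or> pdy F q \<noteq> 0} = (S \<inter> pdx F -` (-{0})) \<union> (S \<inter> pdy F -` (-{0}))"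
    by auto
  then show ?thesis
    using continuous_open_preimage[OF assms(2,1), of "-{0}"] continuous_open_preimage[OF assms(3,1), of "-{0}"]
    by (simp add: open_Un open_Compl)
qed

lemma spherical_frontal_frontal_on:
  assumes "open \<Omega>" "harmonic_sphere_map \<Omega> N" "spherical_frontal \<Omega> N f"
  shows "frontal_on \<Omega> f N"
  unfolding frontal_on_def
proof (intro ballI conjI allI)
  fix q v assume "q \<in> \<Omega>"
  with assms show "norm (N q) = 1"
    unfolding harmonic_sphere_map_def by blast
  have df: "f differentiable (at q)"
    using assms \<open>q \<in> \<Omega>\<close> smooth_on_differentiable_at unfolding spherical_frontal_def by blast
  then show "frechet_derivative f (at q) v \<bullet> N q = 0"
    using assms(3) \<open>q \<in> \<Omega>\<close> unfolding frechet_derivative_complex_eq[OF df] spherical_frontal_def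
    by (auto simp: inner_diff_left dot_cross_self)
qed

lemma spherical_frontal_lift_immersive_iff:
  assumes "open \<Omega>" "harmonic_sphere_map \<Omega> N" "spherical_frontal \<Omega> N f" "q \<in> \<Omega>"
  shows "(\<lambda>z. (f z, N z)) differentiable (at q) \<and> inj (frechet_derivative (\<lambda>z. (f z, N z)) (at q))
    \<longleftrightarrow> pdx N q \<noteq> 0 \<or> pdy N q \<noteq> 0"
proof -
  have unit: "\<forall>z\<in>\<Omega>. norm (N z) = 1" and "smooth_on \<Omega> N" "smooth_on \<Omega> f"
    using assms(2,3) unfolding harmonic_sphere_map_def spherical_frontal_def by auto
  then have dN: "N differentiable (at q)" and df: "f differentiable (at q)"
    using assms(1,4) smooth_on_differentiable_at by blast+
  have "N q \<bullet> pdx N q = 0" "N q \<bullet> pdy N q = 0"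
    unfolding pdx_def pdy_def using unit_sphere_derivative_orthogonal[OF assms(1,4) unit dN] by auto
  then show ?thesis
    using spherical_lift_inj_iff[OF df dN] differentiable_Pair[OF df dN] assms(3,4) unit
    unfolding spherical_frontal_def by auto
qed

theorem proposition2p1:
  fixes \<Omega> :: "complex set" and N f :: "complex \<Rightarrow> real^3" and p :: complex
  assumes "open \<Omega>" and "simply_connected \<Omega>"
    and "harmonic_sphere_map \<Omega> N"
    and "spherical_frontal \<Omega> N f"
    and "p \<in> \<Omega>"
  shows "wave_front_near \<Omega> f N p \<longleftrightarrow> dim (range (frechet_derivative N (at p))) \<noteq> 0"
proof -
  have smooth: "smooth_on \<Omega> N"
    using assms(3) unfolding harmonic_sphere_map_def by blast
  have dim_iff: "dim (range (frechet_derivative N (at p))) \<noteq> 0 \<longleftrightarrow> pdx N p \<noteq> 0 \<or> pdy N p \<noteq> 0"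
    using dim_range_frechet_derivative_complex_eq_0_iff[OF smooth_on_differentiable_at[OF smooth assms(1,5)]]
    by auto
  define U where "U = {q \<in> \<Omega>. pdx N q \<noteq> 0 \<or> pdy N q \<noteq> 0}"
  have "open U"
    unfolding U_def using open_nonvanishing_partials[OF assms(1) smooth_on_continuous_partials[OF smooth]] .
  moreover have "wave_front_on U f N"
    using spherical_frontal_frontal_on[OF assms(1,3,4)]
      spherical_frontal_lift_immersive_iff[OF assms(1,3,4)]
    unfolding wave_front_on_def frontal_on_def U_def by auto
  ultimately have "p \<in> U \<Longrightarrow> wave_front_near \<Omega> f N p"
    unfolding wave_front_near_def U_def by blast
  moreover have "wave_front_near \<Omega> f N p \<Longrightarrow> p \<in> U"
    using spherical_frontal_lift_immersive_iff[OF assms(1,3,4,5)] assms(5)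
    unfolding wave_front_near_def wave_front_on_def U_def by blast
  ultimately show ?thesis
    using dim_iff assms(5) unfolding U_def by blast
qed

end
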